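(* Let $\mathcal{K}$ be a finite index set (the base stations) and let $\mathcal{N}\subseteq\mathcal{K}$ be a nonempty subset (the cooperating base stations). For each $n\in\mathcal{K}$ let $P_n>0$, and assume that the values $P_n$, $n\in\mathcal{N}$, are pairwise distinct. Let $(h_n)_{n\in\mathcal{K}}$ be independent circularly symmetric complex Gaussian random variables with $\mathbb{E}[h_n]=0$ and $\mathbb{E}|h_n|^2=1$, so that $H_n:=|h_n|^2P_n$ are independent exponential random variables with means $P_n$. Let $\sigma_z^2\ge 0$ and define the SINR $$\gamma(\mathcal{N})=\frac{\sum_{n\in\mathcal{N}}|h_n|^2P_n}{\sum_{k\in\mathcal{K}\setminus\mathcal{N}}|h_k|^2P_k+\sigma_z^2}$$ (when $\sigma_z^2=0$ and $\mathcal{K}\setminus\mathcal{N}=\emptyset$ the statement is not considered). Then for every threshold $\gamma_{th}>0$, the outage probability $P^{out}_{\mathcal{N}}(\gamma_{th}):=\mathbb{P}\big(\gamma(\mathcal{N})\le\gamma_{th}\big)$ equals $$P^{out}_{\mathcal{N}}(\gamma_{th})=1-\sum_{n\in\mathcal{N}}\left(e^{-\gamma_{th}\sigma_z^2/P_n}\prod_{j\in\mathcal{N},\,j\neq n}\frac{P_n}{P_n-P_j}\prod_{k\in\mathcal{K}\setminus\mathcal{N}}\frac{P_n}{P_k\gamma_{th}+P_n}\right).$$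
   Context: Model: a mobile receives a joint (coordinated multipoint) downlink transmission from the base stations in $\mathcal{N}$, while base stations in $\mathcal{K}\setminus\mathcal{N}$ act as interferers. $P_n$ is the average received power from base station $n$ (transmit power times path gain), $h_n$ is the Rayleigh fast-fading coefficient, and $\sigma_z^2$ is the thermal noise power. An empty product is equal to $1$. *)

theory Defs
  imports "HOL-Probability.Probability"
begin

text \<open>Density (w.r.t. Lebesgue measure on the complex plane) of a circularly
symmetric complex Gaussian with mean 0 and E|h|^2 = 1, i.e. CN(0,1).\<close>
definition cn01_density :: "complex \<Rightarrow> real" where
  "cn01_density z = exp (- (cmod z)\<^sup>2) / pi"

definition sinr :: "'k set \<Rightarrow> 'k set \<Rightarrow> ('k \<Rightarrow> real) \<Rightarrow> real \<Rightarrow> ('k \<Rightarrow> complex) \<Rightarrow> real" where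
  "sinr K N P s2 h =
     (\<Sum>n\<in>N. (cmod (h n))\<^sup>2 * P n) / ((\<Sum>k\<in>K - N. (cmod (h k))\<^sup>2 * P k) + s2)"

end

theory Submission
  imports Defs "HOL-Real_Asymp.Real_Asymp"
begin

(*
  With X_k = |h_k|^2 the SINR is  S / (I + s2)  with  S = sum_{n in N} P_n X_n  and
  I = sum_{k in K-N} P_k X_k.
     The proof is an induction over N, peeling off one summand at a time (a convolution with an
     exponential density); a partial fraction identity gives sum_n c_n = 1, which closes the recursion.
  3. Conditioning on the interferers, P(S > gth (I + s2)) is the average of the tail at
     t = gth (I + s2); each term factorises into Laplace transforms E[e^{-a X}] = 1/(1+a).
  4. Independence identifies the joint law of the X_k with the product of Exp(1) distributions,
     the denominator I + s2 is almost surely positive, and {SINR <= gth} is the complement of the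
     success event {S > gth (I + s2)}.
*)

section \<open>The received power of a CN(0,1) channel is Exp(1)-distributed\<close>

lemma measurable_Complex_pair [measurable]:
  "(\<lambda>p. Complex (fst p) (snd p)) \<in> borel_measurable (lborel \<Otimes>\<^sub>M lborel)"
proof -
  have "(\<lambda>p. Complex (fst p) (snd p)) = (\<lambda>p::real\<times>real. complex_of_real (fst p) + \<i> * complex_of_real (snd p))"
    by (auto simp: complex_eq_iff)
  then show ?thesis by simp
qed

lemma lborel_complex_eq_pair:
  "distr (lborel \<Otimes>\<^sub>M lborel) borel (\<lambda>p. Complex (fst p) (snd p)) = (lborel :: complex measure)"
proof (rule lborel_eqI[symmetric])
  fix l u :: complex assume le: "\<And>b. b \<in> Basis \<Longrightarrow> l \<bullet> b \<le> u \<bullet> b"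
  then have "Re l \<le> Re u" and "Im l \<le> Im u"
    using le[of 1] le[of "\<i>"] by (auto simp: Basis_complex_def)
  moreover have "(\<lambda>p. Complex (fst p) (snd p)) -` box l u \<inter> space (lborel \<Otimes>\<^sub>M lborel)
     = {Re l<..<Re u} \<times> {Im l<..<Im u}"
    by (auto simp: box_def Basis_complex_def space_pair_measure)
  ultimately show "emeasure (distr (lborel \<Otimes>\<^sub>M lborel) borel (\<lambda>p. Complex (fst p) (snd p))) (box l u) =
      ennreal (\<Prod>b\<in>Basis. (u - l) \<bullet> b)"
    by (simp add: emeasure_distr lborel.emeasure_pair_measure_Times Basis_complex_def ennreal_mult)
qed simp

lemma nn_integral_complex_iterated:
  fixes f :: "complex \<Rightarrow> ennreal"
  assumes [measurable]: "f \<in> borel_measurable borel"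
  shows "(\<integral>\<^sup>+z. f z \<partial>lborel) = (\<integral>\<^sup>+x. \<integral>\<^sup>+y. f (Complex x y) \<partial>lborel \<partial>lborel)"
proof -
  have "(\<integral>\<^sup>+z. f z \<partial>lborel) = (\<integral>\<^sup>+z. f z \<partial>distr (lborel \<Otimes>\<^sub>M lborel) borel (\<lambda>p. Complex (fst p) (snd p)))"
    by (simp add: lborel_complex_eq_pair)
  also have "\<dots> = (\<integral>\<^sup>+p. f (Complex (fst p) (snd p)) \<partial>(lborel \<Otimes>\<^sub>M lborel))"
    by (rule nn_integral_distr) simp_all
  also have "\<dots> = (\<integral>\<^sup>+x. \<integral>\<^sup>+y. f (Complex x y) \<partial>lborel \<partial>lborel)"
    by (subst lborel.nn_integral_fst[symmetric]) simp_all
  finally show ?thesis .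
qed

lemma nn_integral_even:
  fixes g :: "real \<Rightarrow> ennreal"
  assumes [measurable]: "g \<in> borel_measurable borel" and even: "\<And>x. g (- x) = g x"
  shows "(\<integral>\<^sup>+x. g x \<partial>lborel) = 2 * (\<integral>\<^sup>+x. g x * indicator {0..} x \<partial>lborel)"
proof -
  have "(\<integral>\<^sup>+x. g x \<partial>lborel) = (\<integral>\<^sup>+x. g x * indicator {0..} x + g x * indicator {..<0} x \<partial>lborel)"
    by (intro nn_integral_cong) (auto split: split_indicator)
  also have "\<dots> = (\<integral>\<^sup>+x. g x * indicator {0..} x \<partial>lborel) + (\<integral>\<^sup>+x. g x * indicator {..<0} x \<partial>lborel)"
    by (rule nn_integral_add) auto
  also have "(\<integral>\<^sup>+x. g x * indicator {..<0} x \<partial>lborel) = (\<integral>\<^sup>+x. g x * indicator {..<0} x \<partial>distr lborel borel uminus)"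
    by (simp add: lborel_distr_uminus)
  also have "\<dots> = (\<integral>\<^sup>+x. g (- x) * indicator {..<0} (- x) \<partial>lborel)"
    by (subst nn_integral_distr) auto
  also have "\<dots> = (\<integral>\<^sup>+x. g x * indicator {0..} x \<partial>lborel)"
    by (intro nn_integral_cong_AE, rule AE_mp[OF AE_lborel_singleton[of 0]])
       (auto simp: even split: split_indicator)
  finally show ?thesis by (simp add: mult_2)
qed

lemma two_times_ennreal: "2 * ennreal r = ennreal (2 * r)"
  by (simp add: ennreal_mult')

text \<open>The radial Gaussian integral
  \<open>\<integral> |x| e^{-c x^2} [c x^2 > a] dx / \<pi> = e^{-a} / (c \<pi>)\<close>, where \<open>c = 1 + s^2\<close> encodes the direction.\<close>

lemma gaussian_radial_tail:
  fixes a c :: real assumes a: "0 \<le> a" and c: "0 < c"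
  shows "(\<integral>\<^sup>+x. ennreal \<bar>x\<bar> * (ennreal (exp (- (x\<^sup>2 * c)) / pi) * indicator {a<..} (x\<^sup>2 * c)) \<partial>lborel)
         = ennreal (exp (- a) / (c * pi))"
proof -
  define b where "b = sqrt (a / c)"
  have b0: "0 \<le> b" using a c by (simp add: b_def)
  have bb: "b\<^sup>2 * c = a" using a c by (simp add: b_def)
  have iff: "(a < x\<^sup>2 * c) = (b < x)" if x: "0 \<le> x" for x
  proof -
    have "(a < x\<^sup>2 * c) = (a / c < x\<^sup>2)" using c by (simp add: field_simps)
    also have "\<dots> = (sqrt (a/c) < sqrt (x\<^sup>2))" by (simp only: real_sqrt_less_iff)
    also have "\<dots> = (b < x)" using x by (simp add: b_def)
    finally show ?thesis .
  qed
  have "(\<integral>\<^sup>+x. ennreal \<bar>x\<bar> * (ennreal (exp (- (x\<^sup>2 * c)) / pi) * indicator {a<..} (x\<^sup>2 * c)) \<partial>lborel)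
      = 2 * (\<integral>\<^sup>+x. ennreal \<bar>x\<bar> * (ennreal (exp (- (x\<^sup>2 * c)) / pi) * indicator {a<..} (x\<^sup>2 * c)) * indicator {0..} x \<partial>lborel)"
    by (rule nn_integral_even) auto
  also have "(\<integral>\<^sup>+x. ennreal \<bar>x\<bar> * (ennreal (exp (- (x\<^sup>2 * c)) / pi) * indicator {a<..} (x\<^sup>2 * c)) * indicator {0..} x \<partial>lborel)
      = (\<integral>\<^sup>+x. ennreal (x * exp (- (x\<^sup>2 * c)) / pi) * indicator {b..} x \<partial>lborel)"
  proof (intro nn_integral_cong_AE, rule AE_mp[OF AE_lborel_singleton[of b]], intro AE_I2 impI)
    fix x :: real assume "x \<noteq> b"
    then show "ennreal \<bar>x\<bar> * (ennreal (exp (- (x\<^sup>2 * c)) / pi) * indicator {a<..} (x\<^sup>2 * c)) * indicator {0..} x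
        = ennreal (x * exp (- (x\<^sup>2 * c)) / pi) * indicator {b..} x"
      using iff[of x] b0 by (cases "0 \<le> x") (auto split: split_indicator simp: ennreal_mult[symmetric])
  qed
  also have "\<dots> = ennreal (0 - (- exp (- (b\<^sup>2 * c)) / (2 * c * pi)))"
  proof (rule nn_integral_FTC_atLeast)
    show "((\<lambda>x. - exp (- (x\<^sup>2 * c)) / (2 * c * pi)) \<longlongrightarrow> 0) at_top"
      using c by real_asymp
  qed (use c b0 in \<open>auto intro!: derivative_eq_intros simp: field_simps\<close>)
  finally show ?thesis using c by (simp add: bb two_times_ennreal)
qed

text \<open>After Fubini, the substitution \<open>y = x s\<close> separates a radial integral from
  \<open>\<integral> ds / (1 + s^2) = \<pi>\<close>.\<close>

lemma cn01_norm_sq_tail: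
  fixes a :: real assumes a: "0 \<le> a"
  shows "(\<integral>\<^sup>+z. ennreal (cn01_density z) * indicator {z. a < (cmod z)\<^sup>2} z \<partial>lborel) = ennreal (exp (- a))"
proof -
  define G where "G u = ennreal (exp (-u) / pi) * indicator {a<..} u" for u :: real
  have [measurable]: "G \<in> borel_measurable borel" unfolding G_def by measurable
  have "(\<integral>\<^sup>+z. ennreal (cn01_density z) * indicator {z. a < (cmod z)\<^sup>2} z \<partial>lborel)
      = (\<integral>\<^sup>+x. \<integral>\<^sup>+y. G (x\<^sup>2 + y\<^sup>2) \<partial>lborel \<partial>lborel)"
    by (subst nn_integral_complex_iterated)
       (auto simp: G_def cn01_density_def cmod_def split: split_indicator intro!: nn_integral_cong)
  also have "\<dots> = (\<integral>\<^sup>+x. ennreal \<bar>x\<bar> * (\<integral>\<^sup>+s. G (x\<^sup>2 * (1 + s\<^sup>2)) \<partial>lborel) \<partial>lborel)"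
  proof (intro nn_integral_cong_AE, rule AE_mp[OF AE_lborel_singleton[of 0]], intro AE_I2 impI)
    fix x :: real assume x: "x \<noteq> 0"
    have "(\<integral>\<^sup>+y. G (x\<^sup>2 + y\<^sup>2) \<partial>lborel) = ennreal \<bar>x\<bar> * (\<integral>\<^sup>+s. G (x\<^sup>2 + (0 + x * s)\<^sup>2) \<partial>lborel)"
      by (rule nn_integral_real_affine[OF _ x]) simp
    also have "(\<lambda>s. x\<^sup>2 + (0 + x * s)\<^sup>2) = (\<lambda>s. x\<^sup>2 * (1 + s\<^sup>2))"
      by (auto simp: fun_eq_iff algebra_simps power2_eq_square)
    finally show "(\<integral>\<^sup>+y. G (x\<^sup>2 + y\<^sup>2) \<partial>lborel) = ennreal \<bar>x\<bar> * (\<integral>\<^sup>+s. G (x\<^sup>2 * (1 + s\<^sup>2)) \<partial>lborel)" .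
  qed
  also have "\<dots> = (\<integral>\<^sup>+x. \<integral>\<^sup>+s. ennreal \<bar>x\<bar> * G (x\<^sup>2 * (1 + s\<^sup>2)) \<partial>lborel \<partial>lborel)"
    by (intro nn_integral_cong nn_integral_cmult[symmetric]) simp
  also have "\<dots> = (\<integral>\<^sup>+s. \<integral>\<^sup>+x. ennreal \<bar>x\<bar> * G (x\<^sup>2 * (1 + s\<^sup>2)) \<partial>lborel \<partial>lborel)"
    by (rule lborel_pair.Fubini') simp
  also have "\<dots> = (\<integral>\<^sup>+s. ennreal (exp (- a) / ((1 + s\<^sup>2) * pi)) \<partial>lborel)"
    by (intro nn_integral_cong)
       (simp add: G_def gaussian_radial_tail[OF a] add_pos_nonneg)
  also have "\<dots> = 2 * (\<integral>\<^sup>+s. ennreal (exp (- a) / ((1 + s\<^sup>2) * pi)) * indicator {0..} s \<partial>lborel)"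
    by (rule nn_integral_even) auto
  also have "(\<integral>\<^sup>+s. ennreal (exp (- a) / ((1 + s\<^sup>2) * pi)) * indicator {0..} s \<partial>lborel)
      = ennreal (exp (- a) / pi * (pi / 2) - exp (- a) / pi * arctan 0)"
  proof (rule nn_integral_FTC_atLeast)
    show "((\<lambda>s. exp (- a) / pi * arctan s) \<longlongrightarrow> exp (- a) / pi * (pi / 2)) at_top"
      by (intro tendsto_intros tendsto_arctan_at_top)
    show "((\<lambda>s. exp (- a) / pi * arctan s) has_real_derivative exp (- a) / ((1 + x\<^sup>2) * pi)) (at x)" for x
      by (auto intro!: derivative_eq_intros simp: divide_inverse mult_ac)
  qed (auto simp: add_pos_nonneg)
  also have "2 * ennreal (exp (- a) / pi * (pi / 2) - exp (- a) / pi * arctan 0) = ennreal (exp (- a))"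
    by (simp add: two_times_ennreal)
  finally show ?thesis .
qed

lemma cn01_norm_sq_exponential:
  assumes "prob_space M" and D: "distributed M lborel h (\<lambda>z. ennreal (cn01_density z))"
  shows "distributed M lborel (\<lambda>x. (cmod (h x))\<^sup>2) (exponential_density 1)"
proof -
  interpret prob_space M by fact
  have [measurable]: "h \<in> borel_measurable M" using distributed_measurable[OF D] by simp
  have [measurable]: "cn01_density \<in> borel_measurable borel" unfolding cn01_density_def by measurable
  show ?thesis
  proof (rule exponential_distributedI[where l=1])
    fix a :: real assume a: "0 \<le> a"
    have S[measurable]: "{z::complex. a < (cmod z)\<^sup>2} \<in> sets lborel" by measurable
    have "emeasure M {x \<in> space M. a < (cmod (h x))\<^sup>2} = emeasure (distr M lborel h) {z. a < (cmod z)\<^sup>2}"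
      by (subst emeasure_distr[OF distributed_measurable[OF D] S]) (auto intro!: arg_cong[where f="emeasure M"])
    also have "\<dots> = (\<integral>\<^sup>+z. ennreal (cn01_density z) * indicator {z. a < (cmod z)\<^sup>2} z \<partial>lborel)"
      by (simp add: distributed_distr_eq_density[OF D] emeasure_density)
    also have "\<dots> = ennreal (exp (- a))" by (rule cn01_norm_sq_tail[OF a])
    finally have gt: "prob {x \<in> space M. a < (cmod (h x))\<^sup>2} = exp (- a)"
      by (simp add: emeasure_eq_measure)
    have "prob {x \<in> space M. (cmod (h x))\<^sup>2 \<le> a} = prob (space M - {x \<in> space M. a < (cmod (h x))\<^sup>2})"
      by (auto intro!: arg_cong[where f=prob])
    also have "\<dots> = 1 - prob {x \<in> space M. a < (cmod (h x))\<^sup>2}"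
      by (rule prob_compl) measurable
    also have "\<dots> = 1 - exp (- a)" using gt by simp
    finally show "emeasure M {x \<in> space M. (cmod (h x))\<^sup>2 \<le> a} = 1 - ennreal (exp (- a * 1))"
      by (simp add: emeasure_eq_measure ennreal_minus ennreal_1[symmetric] del: ennreal_1)
  qed simp_all
qed

section \<open>A partial fraction identity\<close>

lemma partial_fraction_step:
  fixes z a b D :: real
  assumes "z \<noteq> a" "z \<noteq> b" "a \<noteq> b" "D \<noteq> 0"
  shows "1/((z-a)*(z-b)*D) = 1/((z-a)*(a-b)*D) + 1/((z-b)*((b-a)*D))"
proof -
  have "z - a \<noteq> 0" "z - b \<noteq> 0" "a - b \<noteq> 0" "b - a \<noteq> 0" using assms by auto
  with assms show ?thesis by (simp add: divide_simps) (simp add: algebra_simps)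
qed

lemma partial_fractions:
  fixes u :: "'k \<Rightarrow> real"
  assumes "finite N" "N \<noteq> {}" "inj_on u N" "z \<notin> u ` N"
  shows "1 / (\<Prod>j\<in>N. z - u j) = (\<Sum>n\<in>N. 1 / ((z - u n) * (\<Prod>j\<in>N-{n}. u n - u j)))"
  using assms
proof (induction N arbitrary: z rule: finite_ne_induct)
  case (singleton x)
  then show ?case by simp
next
  case (insert m N)
  define D where "D n = (\<Prod>j\<in>N-{n}. u n - u j)" for n
  have injN: "inj_on u N" and um: "u m \<notin> u ` N" and zm: "z \<noteq> u m" and zN: "z \<notin> u ` N"
    using insert by auto
  have D: "D n \<noteq> 0" and un: "u m \<noteq> u n" and zn: "z \<noteq> u n" if "n \<in> N" for n
    using injN um zN that insert.hyps(1) by (auto simp: D_def prod_zero_iff inj_on_def image_iff)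
  have D_insert: "(\<Prod>j\<in>insert m N - {n}. u n - u j) = (u n - u m) * D n" if "n \<in> N" for n
  proof -
    have "insert m N - {n} = insert m (N - {n})" using that insert.hyps by auto
    then show ?thesis using insert.hyps by (simp add: D_def)
  qed
  have "1 / (\<Prod>j\<in>insert m N. z - u j) = 1 / (z - u m) * (1 / (\<Prod>j\<in>N. z - u j))"
    using insert.hyps by simp
  also have "\<dots> = (\<Sum>n\<in>N. 1 / ((z - u m) * (z - u n) * D n))"
    unfolding insert.IH[OF injN zN] sum_distrib_left D_def by (intro sum.cong) (auto simp: mult_ac)
  also have "\<dots> = (\<Sum>n\<in>N. 1 / ((z - u m) * (u m - u n) * D n) + 1 / ((z - u n) * ((u n - u m) * D n)))"
    by (intro sum.cong refl partial_fraction_step) (use zm zn un D in auto)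
  also have "\<dots> = 1 / (z - u m) * (1 / (\<Prod>j\<in>N. u m - u j))
                  + (\<Sum>n\<in>N. 1 / ((z - u n) * (\<Prod>j\<in>insert m N-{n}. u n - u j)))"
    unfolding insert.IH[OF injN um] sum.distrib sum_distrib_left D_def
    by (intro arg_cong2[where f="(+)"] sum.cong) (auto simp: D_insert D_def mult_ac)
  also have "\<dots> = (\<Sum>n\<in>insert m N. 1 / ((z - u n) * (\<Prod>j\<in>insert m N-{n}. u n - u j)))"
    using insert.hyps by simp
  finally show ?case .
qed

text \<open>The coefficients of the hypoexponential distribution with rates \<open>1/P\<^sub>n\<close>.\<close>

definition hypo_coef :: "'k set \<Rightarrow> ('k \<Rightarrow> real) \<Rightarrow> 'k \<Rightarrow> real" where
  "hypo_coef N P n = (\<Prod>j\<in>N-{n}. P n / (P n - P j))"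

text \<open>They sum to one: evaluate the partial fraction identity for the nodes \<open>1/P\<^sub>j\<close> at \<open>z = 0\<close>.\<close>

lemma hypo_coef_sum:
  fixes P :: "'k \<Rightarrow> real"
  assumes "finite N" "N \<noteq> {}" "inj_on P N" "\<And>n. n \<in> N \<Longrightarrow> P n > 0"
  shows "(\<Sum>n\<in>N. hypo_coef N P n) = 1"
proof -
  define u where "u j = 1 / P j" for j
  have inju: "inj_on u N" using assms(3,4) by (auto simp: inj_on_def u_def)
  have upos: "n \<in> N \<Longrightarrow> u n > 0" for n using assms(4) by (simp add: u_def)
  have z0: "0 \<notin> u ` N" using upos by force
  have nz: "(\<Prod>j\<in>N. 0 - u j) \<noteq> 0" using upos assms(1) by (force simp: prod_zero_iff)
  have summand: "(\<Prod>j\<in>N. 0 - u j) * (1 / ((0 - u n) * (\<Prod>j\<in>N-{n}. u n - u j))) = hypo_coef N P n"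
    if n: "n \<in> N" for n
  proof -
    have D: "(\<Prod>j\<in>N-{n}. u n - u j) \<noteq> 0"
      using inju n assms(1) by (auto simp: prod_zero_iff inj_on_def)
    have "(\<Prod>j\<in>N. 0 - u j) = (0 - u n) * (\<Prod>j\<in>N-{n}. 0 - u j)"
      using n assms(1) by (simp add: prod.remove)
    then have "(\<Prod>j\<in>N. 0 - u j) * (1 / ((0 - u n) * (\<Prod>j\<in>N-{n}. u n - u j)))
        = (\<Prod>j\<in>N-{n}. 0 - u j) / (\<Prod>j\<in>N-{n}. u n - u j)"
      using upos[OF n] D by simp
    also have "\<dots> = (\<Prod>j\<in>N-{n}. (0 - u j) / (u n - u j))"
      by (rule prod_dividef[symmetric])
    also have "\<dots> = hypo_coef N P n"
      unfolding hypo_coef_def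
    proof (intro prod.cong refl)
      fix j assume j: "j \<in> N - {n}"
      have "P j > 0" "P n > 0" "P n \<noteq> P j" using j n assms(3,4) by (auto simp: inj_on_def)
      then show "(0 - u j) / (u n - u j) = P n / (P n - P j)"
        by (simp add: u_def field_simps)
    qed
    finally show ?thesis .
  qed
  have "1 = (\<Prod>j\<in>N. 0 - u j) * (1 / (\<Prod>j\<in>N. 0 - u j))" using nz by simp
  also have "\<dots> = (\<Sum>n\<in>N. hypo_coef N P n)"
    unfolding partial_fractions[OF assms(1,2) inju z0] sum_distrib_left
    by (intro sum.cong refl summand)
  finally show ?thesis by simp
qed

section \<open>Weighted sums of independent standard exponential variables\<close>

definition Exp1 :: "real measure" where
  "Exp1 = density lborel (\<lambda>x. ennreal (exponential_density 1 x))"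

lemma prob_space_Exp1: "prob_space Exp1"
  unfolding Exp1_def by (rule prob_space_exponential_density) simp

lemma space_Exp1 [simp]: "space Exp1 = UNIV"
  by (simp add: Exp1_def)

lemma sets_Exp1 [simp, measurable_cong]: "sets Exp1 = sets borel"
  by (simp add: Exp1_def)

lemma product_prob_space_Exp1: "product_prob_space (\<lambda>_::'k. Exp1)"
  using prob_space_Exp1
  by (simp add: product_prob_space_def product_prob_space_axioms_def product_sigma_finite_def
      prob_space_imp_sigma_finite)

lemma AE_nonneg_Exp1: "AE y in Exp1. 0 \<le> y"
  unfolding Exp1_def by (subst AE_density) (auto simp: exponential_density_def intro!: AE_I2)

lemma nn_integral_Exp1:
  assumes [measurable]: "f \<in> borel_measurable borel"
  shows "(\<integral>\<^sup>+y. f y \<partial>Exp1) = (\<integral>\<^sup>+y. ennreal (exp (- y)) * f y * indicator {0..} y \<partial>lborel)"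
  unfolding Exp1_def
  by (subst nn_integral_density) (auto intro!: nn_integral_cong simp: exponential_density_def split: split_indicator)

lemma nn_integral_exp_tail:
  fixes b T :: real assumes b: "0 < b"
  shows "(\<integral>\<^sup>+y. ennreal (exp (- (b * y))) * indicator {T..} y \<partial>lborel) = ennreal (exp (- (b * T)) / b)"
proof -
  have "(\<integral>\<^sup>+y. ennreal (exp (- (b * y))) * indicator {T..} y \<partial>lborel) = ennreal (0 - (- exp (- (b * T)) / b))"
  proof (rule nn_integral_FTC_atLeast)
    show "((\<lambda>y. - exp (- (b * y)) / b) \<longlongrightarrow> 0) at_top"
      using b by real_asymp
  qed (use b in \<open>auto intro!: derivative_eq_intros\<close>)
  then show ?thesis by simp
qed

lemma exp_has_integral:
  fixes b T :: real
  assumes "b \<noteq> 0" "0 \<le> T"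
  shows "((\<lambda>y. exp (- b * y)) has_integral (1 - exp (- b * T)) / b) {0..T}"
proof -
  have "((\<lambda>y. exp (- b * y)) has_integral ((- exp (- b * T) / b) - (- exp (- b * 0) / b))) {0..T}"
  proof (rule fundamental_theorem_of_calculus[OF assms(2)])
    fix x :: real
    have "((\<lambda>y. - exp (- b * y) / b) has_real_derivative exp (- b * x)) (at x)"
      using assms(1) by (auto intro!: derivative_eq_intros simp: field_simps)
    then show "((\<lambda>y. - exp (- b * y) / b) has_vector_derivative exp (- b * x)) (at x within {0..T})"
      by (simp add: has_real_derivative_iff_has_vector_derivative[symmetric] has_field_derivative_at_within)
  qed
  then show ?thesis by (simp add: diff_divide_distrib)
qed

lemma measurable_weighted_sum:
  fixes P :: "'k \<Rightarrow> real"
  assumes "N \<subseteq> I"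
  shows "(\<lambda>x. \<Sum>n\<in>N. P n * x n) \<in> borel_measurable (PiM I (\<lambda>_. Exp1))"
proof (rule borel_measurable_sum)
  fix n assume "n \<in> N"
  then have "(\<lambda>x. x n) \<in> measurable (PiM I (\<lambda>_. Exp1)) Exp1"
    using assms by (intro measurable_component_singleton) auto
  then show "(\<lambda>x. P n * x n) \<in> borel_measurable (PiM I (\<lambda>_. Exp1))"
    by (simp add: measurable_cong_sets[OF refl sets_Exp1])
qed

text \<open>The survival function \<open>t \<mapsto> P(\<Sum>\<^sub>n P\<^sub>n Y\<^sub>n > t)\<close> of the hypoexponential distribution.\<close>

definition hypo_tail :: "'k set \<Rightarrow> ('k \<Rightarrow> real) \<Rightarrow> real \<Rightarrow> real" where
  "hypo_tail N P t = (if t < 0 then 1 else (\<Sum>n\<in>N. hypo_coef N P n * exp (- t / P n)))"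

lemma hypo_tail_measurable [measurable]:
  "(\<lambda>y. hypo_tail N P (f y)) \<in> borel_measurable borel" if [measurable]: "f \<in> borel_measurable borel"
  unfolding hypo_tail_def by measurable

lemma hypo_coef_insert:
  assumes "finite N" "m \<notin> N" "n \<in> N"
  shows "hypo_coef (insert m N) P n = hypo_coef N P n * (P n / (P n - P m))"
proof -
  have "insert m N - {n} = insert m (N - {n})" using assms by auto
  then show ?thesis using assms by (simp add: hypo_coef_def mult_ac)
qed

text \<open>The convolution step on the bounded range \<open>0 \<le> y \<le> t/P\<^sub>m\<close> of the new summand:
  there the argument of the old tail stays nonnegative, so the integral is explicit.\<close>

lemma hypo_tail_convolution_integral:
  fixes N :: "'k set" and P :: "'k \<Rightarrow> real"
  assumes fin: "finite N" and m: "m \<notin> N" and inj: "inj_on P (insert m N)"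
    and pos: "\<And>n. n \<in> insert m N \<Longrightarrow> P n > 0" and t: "0 \<le> t"
  shows "((\<lambda>y. exp (- y) * hypo_tail N P (t - P m * y)) has_integral
           hypo_tail (insert m N) P t - exp (- t / P m)) {0..t / P m}"
proof -
  define T where "T = t / P m"
  define b where "b n = (P n - P m) / P n" for n
  have Pm: "P m > 0" and Pn: "n \<in> N \<Longrightarrow> P n > 0" and Pnm: "n \<in> N \<Longrightarrow> P n \<noteq> P m" for n
    using pos inj m by (auto simp: inj_on_def)
  have T0: "0 \<le> T" using t Pm by (simp add: T_def)
  have b: "n \<in> N \<Longrightarrow> b n \<noteq> 0" for n using Pn[of n] Pnm[of n] by (auto simp: b_def)
  define I where "I = (\<Sum>n\<in>N. hypo_coef N P n * exp (- t / P n) * ((1 - exp (- b n * T)) / b n))"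
  have "((\<lambda>y. \<Sum>n\<in>N. hypo_coef N P n * exp (- t / P n) * exp (- b n * y)) has_integral I) {0..T}"
    unfolding I_def by (intro has_integral_sum fin has_integral_mult_right exp_has_integral b T0)
  moreover have "(\<Sum>n\<in>N. hypo_coef N P n * exp (- t / P n) * exp (- b n * y)) = exp (- y) * hypo_tail N P (t - P m * y)"
    if y: "y \<in> {0..T}" for y
  proof -
    have "\<not> t - P m * y < 0" using y Pm by (auto simp: T_def field_simps)
    moreover have "exp (- t / P n) * exp (- b n * y) = exp (- y) * exp (- (t - P m * y) / P n)" if "n \<in> N" for n
      using Pn[OF that] by (simp add: b_def mult_exp_exp field_simps)
    ultimately show ?thesis by (simp add: hypo_tail_def sum_distrib_left mult_ac)
  qed
  ultimately have integral: "((\<lambda>y. exp (- y) * hypo_tail N P (t - P m * y)) has_integral I) {0..T}"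
    by (rule has_integral_eq[rotated]) simp
  have summand: "hypo_coef N P n * exp (- t / P n) * ((1 - exp (- b n * T)) / b n)
      = hypo_coef (insert m N) P n * (exp (- t / P n) - exp (- t / P m))" if n: "n \<in> N" for n
  proof -
    have "exp (- t / P n) * exp (- b n * T) = exp (- t / P m)"
      using Pn[OF n] Pm by (simp add: mult_exp_exp T_def b_def field_simps)
    then show ?thesis
      using Pn[OF n] Pnm[OF n] hypo_coef_insert[OF fin m n] by (simp add: b_def field_simps)
  qed
  have coef_sum: "(\<Sum>n\<in>N. hypo_coef (insert m N) P n) = 1 - hypo_coef (insert m N) P m"
    using hypo_coef_sum[of "insert m N" P] fin m inj pos by simp
  have "I = (\<Sum>n\<in>N. hypo_coef (insert m N) P n * (exp (- t / P n) - exp (- t / P m)))"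
    unfolding I_def by (rule sum.cong[OF refl summand])
  also have "\<dots> = (\<Sum>n\<in>N. hypo_coef (insert m N) P n * exp (- t / P n))
                   - (1 - hypo_coef (insert m N) P m) * exp (- t / P m)"
    by (simp add: right_diff_distrib sum_subtractf sum_distrib_right[symmetric] coef_sum)
  also have "\<dots> = hypo_tail (insert m N) P t - exp (- t / P m)"
    using t fin m by (simp add: hypo_tail_def algebra_simps)
  finally show ?thesis using integral by (simp add: T_def)
qed


lemma nn_integral_Exp1_split:
  fixes f :: "real \<Rightarrow> real" and T :: real
  assumes [measurable]: "f \<in> borel_measurable borel" and T: "0 \<le> T" and one: "\<And>y. T < y \<Longrightarrow> f y = 1"
  shows "(\<integral>\<^sup>+y. ennreal (f y) \<partial>Exp1)
       = (\<integral>\<^sup>+y. ennreal (exp (- y) * f y) * indicator {0..T} y \<partial>lborel) + ennreal (exp (- T))"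
proof -
  have "(\<integral>\<^sup>+y. ennreal (f y) \<partial>Exp1)
      = (\<integral>\<^sup>+y. ennreal (exp (- y) * f y) * indicator {0..T} y + ennreal (exp (- (1 * y))) * indicator {T<..} y \<partial>lborel)"
    by (subst nn_integral_Exp1, measurable, intro nn_integral_cong)
       (use T one in \<open>auto simp: ennreal_mult' split: split_indicator\<close>)
  also have "\<dots> = (\<integral>\<^sup>+y. ennreal (exp (- y) * f y) * indicator {0..T} y \<partial>lborel)
              + (\<integral>\<^sup>+y. ennreal (exp (- (1 * y))) * indicator {T<..} y \<partial>lborel)"
    by (rule nn_integral_add) auto
  also have "(\<integral>\<^sup>+y. ennreal (exp (- (1 * y))) * indicator {T<..} y \<partial>lborel)
           = (\<integral>\<^sup>+y. ennreal (exp (- (1 * y))) * indicator {T..} y \<partial>lborel)"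
    by (intro nn_integral_cong_AE, rule AE_mp[OF AE_lborel_singleton[of T]])
       (auto split: split_indicator)
  also have "\<dots> = ennreal (exp (- T))"
    using nn_integral_exp_tail[of 1 T] by simp
  finally show ?thesis .
qed

text \<open>One convolution step: \<open>P(P\<^sub>m Y\<^sub>m + S > t) = E[tail\<^sub>S(t - P\<^sub>m Y\<^sub>m)]\<close> is again a hypoexponential
  tail, now for the enlarged index set.\<close>

lemma hypo_tail_convolution:
  fixes N :: "'k set" and P :: "'k \<Rightarrow> real"
  assumes fin: "finite N" and m: "m \<notin> N" and inj: "inj_on P (insert m N)"
    and pos: "\<And>n. n \<in> insert m N \<Longrightarrow> P n > 0" and nonneg: "\<And>s. 0 \<le> hypo_tail N P s"
  shows "(\<integral>\<^sup>+y. ennreal (hypo_tail N P (t - P m * y)) \<partial>Exp1) = ennreal (hypo_tail (insert m N) P t)"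
    and "0 \<le> hypo_tail (insert m N) P t"
proof -
  have Pm: "P m > 0" using pos by simp
  have "(\<integral>\<^sup>+y. ennreal (hypo_tail N P (t - P m * y)) \<partial>Exp1) = ennreal (hypo_tail (insert m N) P t)
        \<and> 0 \<le> hypo_tail (insert m N) P t"
  proof (cases "t < 0")
    case True
    text \<open>For \<open>t < 0\<close> the event is almost sure, both sides equal 1.\<close>
    have neg: "t < P m * y" if "0 \<le> y" for y
      using True Pm that by (smt (verit) mult_nonneg_nonneg)
    have "AE y in Exp1. ennreal (hypo_tail N P (t - P m * y)) = 1"
      using AE_nonneg_Exp1 by eventually_elim (simp add: hypo_tail_def neg)
    then have "(\<integral>\<^sup>+y. ennreal (hypo_tail N P (t - P m * y)) \<partial>Exp1) = (\<integral>\<^sup>+y. 1 \<partial>Exp1)"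
      by (rule nn_integral_cong_AE)
    then show ?thesis using True prob_space.emeasure_space_1[OF prob_space_Exp1] by (simp add: hypo_tail_def)
  next
    case False
    define T where "T = t / P m"
    have T0: "0 \<le> T" using False Pm by (simp add: T_def)
    have integral: "((\<lambda>y. exp (- y) * hypo_tail N P (t - P m * y)) has_integral
           hypo_tail (insert m N) P t - exp (- T)) {0..T}"
      using hypo_tail_convolution_integral[OF fin m inj pos] False by (simp add: T_def)
    have integral_nonneg: "0 \<le> hypo_tail (insert m N) P t - exp (- T)"
      by (rule has_integral_nonneg[OF integral]) (simp add: nonneg)
    text \<open>Beyond \<open>y = T\<close> the argument of the old tail is negative, so the tail equals 1.\<close>
    have "(\<integral>\<^sup>+y. ennreal (hypo_tail N P (t - P m * y)) \<partial>Exp1)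
       = (\<integral>\<^sup>+y. ennreal (exp (- y) * hypo_tail N P (t - P m * y)) * indicator {0..T} y \<partial>lborel)
         + ennreal (exp (- T))"
      by (rule nn_integral_Exp1_split[OF _ T0]) (use Pm in \<open>auto simp: T_def field_simps hypo_tail_def\<close>)
    also have "\<dots> = ennreal (hypo_tail (insert m N) P t - exp (- T)) + ennreal (exp (- T))"
      by (subst nn_integral_has_integral_lebesgue'[OF _ integral]) (simp_all add: nonneg)
    also have "\<dots> = ennreal (hypo_tail (insert m N) P t)"
      by (metis diff_add_cancel ennreal_plus[OF integral_nonneg exp_ge_zero])
    finally show ?thesis
      using integral_nonneg exp_ge_zero[of "- T"] by linarith
  qed
  then show "(\<integral>\<^sup>+y. ennreal (hypo_tail N P (t - P m * y)) \<partial>Exp1) = ennreal (hypo_tail (insert m N) P t)"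
    and "0 \<le> hypo_tail (insert m N) P t" by simp_all
qed

lemma hypo_tail_nonneg:
  assumes "finite N" "inj_on P N" "\<And>n. n \<in> N \<Longrightarrow> P n > 0"
  shows "0 \<le> hypo_tail N P t"
  using assms
proof (induction N arbitrary: t rule: finite_induct)
  case empty
  then show ?case by (simp add: hypo_tail_def)
next
  case (insert m N)
  then show ?case by (intro hypo_tail_convolution(2)) auto
qed

text \<open>Fubini for the last coordinate: conditioning on \<open>Y\<^sub>m = y\<close> shifts the threshold by \<open>P\<^sub>m y\<close>.\<close>

lemma emeasure_weighted_sum_insert:
  fixes N :: "'k set" and P :: "'k \<Rightarrow> real"
  assumes fin: "finite N" and m: "m \<notin> N"
  shows "emeasure (PiM (insert m N) (\<lambda>_. Exp1)) {x \<in> space (PiM (insert m N) (\<lambda>_. Exp1)). t < (\<Sum>n\<in>insert m N. P n * x n)}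
       = (\<integral>\<^sup>+y. emeasure (PiM N (\<lambda>_. Exp1)) {x \<in> space (PiM N (\<lambda>_. Exp1)). t - P m * y < (\<Sum>n\<in>N. P n * x n)} \<partial>Exp1)"
proof -
  interpret product_prob_space "\<lambda>_::'k. Exp1" by (rule product_prob_space_Exp1)
  define A where "A = {x \<in> space (PiM (insert m N) (\<lambda>_. Exp1)). t < (\<Sum>n\<in>insert m N. P n * x n)}"
  define B where "B s = {x \<in> space (PiM N (\<lambda>_. Exp1)). s < (\<Sum>n\<in>N. P n * x n)}" for s
  have A_sets [measurable]: "A \<in> sets (PiM (insert m N) (\<lambda>_. Exp1))"
    using measurable_weighted_sum[of "insert m N" "insert m N" P] unfolding A_def by measurable
  have B_sets: "B s \<in> sets (PiM N (\<lambda>_. Exp1))" for s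
    using measurable_weighted_sum[of N N P] unfolding B_def by measurable
  have "emeasure (PiM (insert m N) (\<lambda>_. Exp1)) A = (\<integral>\<^sup>+x. indicator A x \<partial>PiM (insert m N) (\<lambda>_. Exp1))"
    using A_sets by simp
  also have "\<dots> = (\<integral>\<^sup>+y. \<integral>\<^sup>+x. indicator A (x(m := y)) \<partial>PiM N (\<lambda>_. Exp1) \<partial>Exp1)"
    by (rule product_nn_integral_insert_rev) (use fin m in auto)
  also have "\<dots> = (\<integral>\<^sup>+y. \<integral>\<^sup>+x. indicator (B (t - P m * y)) x \<partial>PiM N (\<lambda>_. Exp1) \<partial>Exp1)"
  proof (intro nn_integral_cong)
    fix y :: real and x assume x: "x \<in> space (PiM N (\<lambda>_. Exp1))"
    then have "x(m := y) \<in> space (PiM (insert m N) (\<lambda>_. Exp1))"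
      by (auto simp: space_PiM PiE_def extensional_def)
    moreover have "(\<Sum>n\<in>insert m N. P n * (x(m := y)) n) = P m * y + (\<Sum>n\<in>N. P n * x n)"
      using fin m by (auto intro!: sum.cong)
    ultimately show "indicator A (x(m := y)) = indicator (B (t - P m * y)) x"
      using x by (auto simp: A_def B_def split: split_indicator)
  qed
  also have "\<dots> = (\<integral>\<^sup>+y. emeasure (PiM N (\<lambda>_. Exp1)) (B (t - P m * y)) \<partial>Exp1)"
    by (intro nn_integral_cong nn_integral_indicator B_sets)
  finally show ?thesis unfolding A_def B_def .
qed

lemma hypo_tail_emeasure:
  assumes "finite N" "inj_on P N" "\<And>n. n \<in> N \<Longrightarrow> P n > 0"
  shows "emeasure (PiM N (\<lambda>_. Exp1)) {x \<in> space (PiM N (\<lambda>_. Exp1)). t < (\<Sum>n\<in>N. P n * x n)}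
           = ennreal (hypo_tail N P t)"
  using assms
proof (induction N arbitrary: t rule: finite_induct)
  case empty
  then show ?case by (cases "t < 0") (auto simp: hypo_tail_def space_PiM_empty)
next
  case (insert m N)
  then have IH: "emeasure (PiM N (\<lambda>_. Exp1)) {x \<in> space (PiM N (\<lambda>_. Exp1)). s < (\<Sum>n\<in>N. P n * x n)}
           = ennreal (hypo_tail N P s)" for s
    by auto
  have nonneg: "\<And>s. 0 \<le> hypo_tail N P s" using insert by (intro hypo_tail_nonneg) auto
  have "emeasure (PiM (insert m N) (\<lambda>_. Exp1)) {x \<in> space (PiM (insert m N) (\<lambda>_. Exp1)). t < (\<Sum>n\<in>insert m N. P n * x n)}
      = (\<integral>\<^sup>+y. ennreal (hypo_tail N P (t - P m * y)) \<partial>Exp1)"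
    by (simp only: emeasure_weighted_sum_insert[OF insert.hyps] IH)
  also have "\<dots> = ennreal (hypo_tail (insert m N) P t)"
    by (rule hypo_tail_convolution(1)[OF insert.hyps insert.prems nonneg])
  finally show ?case .
qed


section \<open>Averaging over the interference\<close>

text \<open>Laplace transform of the standard exponential distribution: \<open>E[e^{-a Y}] = 1/(1+a)\<close>.
  The truncation \<open>max 0\<close> is invisible almost surely and makes the integrand bounded.\<close>

lemma Exp1_laplace:
  fixes a :: real assumes a: "0 \<le> a"
  shows "integrable Exp1 (\<lambda>y. exp (- a * max 0 y))" and "(\<integral>y. exp (- a * max 0 y) \<partial>Exp1) = 1 / (1 + a)"
proof -
  interpret prob_space Exp1 by (rule prob_space_Exp1)
  show int: "integrable Exp1 (\<lambda>y. exp (- a * max 0 y))"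
    by (rule integrable_const_bound[where B=1]) (use a in \<open>auto simp: mult_nonneg_nonneg\<close>)
  have "ennreal (\<integral>y. exp (- a * max 0 y) \<partial>Exp1) = (\<integral>\<^sup>+y. ennreal (exp (- a * max 0 y)) \<partial>Exp1)"
    by (rule nn_integral_eq_integral[OF int, symmetric]) simp
  also have "\<dots> = (\<integral>\<^sup>+y. ennreal (exp (- ((1 + a) * y))) * indicator {0..} y \<partial>lborel)"
    by (subst nn_integral_Exp1)
       (auto intro!: nn_integral_cong simp: ennreal_mult[symmetric] mult_exp_exp algebra_simps split: split_indicator)
  also have "\<dots> = ennreal (1 / (1 + a))"
    using nn_integral_exp_tail[of "1 + a" 0] a by simp
  finally show "(\<integral>y. exp (- a * max 0 y) \<partial>Exp1) = 1 / (1 + a)"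
    using a by (simp add: integral_nonneg_AE)
qed

lemma Exp1_product_laplace:
  fixes a :: "'k \<Rightarrow> real"
  assumes "finite I" "\<And>k. k \<in> I \<Longrightarrow> 0 \<le> a k"
  shows "integrable (PiM I (\<lambda>_. Exp1)) (\<lambda>x. \<Prod>k\<in>I. exp (- a k * max 0 (x k)))"
    and "(\<integral>x. (\<Prod>k\<in>I. exp (- a k * max 0 (x k))) \<partial>PiM I (\<lambda>_. Exp1)) = (\<Prod>k\<in>I. 1 / (1 + a k))"
proof -
  interpret product_prob_space "\<lambda>_::'k. Exp1" by (rule product_prob_space_Exp1)
  show "integrable (PiM I (\<lambda>_. Exp1)) (\<lambda>x. \<Prod>k\<in>I. exp (- a k * max 0 (x k)))"
    using product_integrable_prod[OF assms(1), of "\<lambda>k y. exp (- a k * max 0 y)"] Exp1_laplace(1) assms(2)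
    by simp
  have "(\<integral>x. (\<Prod>k\<in>I. exp (- a k * max 0 (x k))) \<partial>PiM I (\<lambda>_. Exp1))
      = (\<Prod>k\<in>I. \<integral>y. exp (- a k * max 0 y) \<partial>Exp1)"
    using product_integral_prod[OF assms(1), of "\<lambda>k y. exp (- a k * max 0 y)"] Exp1_laplace(1) assms(2)
    by simp
  also have "\<dots> = (\<Prod>k\<in>I. 1 / (1 + a k))"
    using Exp1_laplace(2) assms(2) by simp
  finally show "(\<integral>x. (\<Prod>k\<in>I. exp (- a k * max 0 (x k))) \<partial>PiM I (\<lambda>_. Exp1)) = (\<Prod>k\<in>I. 1 / (1 + a k))" .
qed

lemma interferer_laplace:
  fixes I :: "'k set" and P :: "'k \<Rightarrow> real"
  assumes "finite I" "0 < P n" "\<And>k. k \<in> I \<Longrightarrow> 0 < P k" "0 < gth"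
  shows "integrable (PiM I (\<lambda>_. Exp1)) (\<lambda>x. \<Prod>k\<in>I. exp (- (gth * P k / P n) * max 0 (x k)))"
    and "(\<integral>x. (\<Prod>k\<in>I. exp (- (gth * P k / P n) * max 0 (x k))) \<partial>PiM I (\<lambda>_. Exp1))
           = (\<Prod>k\<in>I. P n / (P k * gth + P n))"
proof -
  have rate: "0 \<le> gth * P k / P n" if "k \<in> I" for k
    using assms(2-4) that by (simp add: less_imp_le)
  show "integrable (PiM I (\<lambda>_. Exp1)) (\<lambda>x. \<Prod>k\<in>I. exp (- (gth * P k / P n) * max 0 (x k)))"
    by (rule Exp1_product_laplace(1)[OF assms(1) rate])
  have "(\<integral>x. (\<Prod>k\<in>I. exp (- (gth * P k / P n) * max 0 (x k))) \<partial>PiM I (\<lambda>_. Exp1))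
      = (\<Prod>k\<in>I. 1 / (1 + gth * P k / P n))"
    by (rule Exp1_product_laplace(2)[OF assms(1) rate])
  also have "\<dots> = (\<Prod>k\<in>I. P n / (P k * gth + P n))"
    using assms(2-4) by (intro prod.cong refl) (simp add: field_simps add_pos_pos)
  finally show "(\<integral>x. (\<Prod>k\<in>I. exp (- (gth * P k / P n) * max 0 (x k))) \<partial>PiM I (\<lambda>_. Exp1))
           = (\<Prod>k\<in>I. P n / (P k * gth + P n))" .
qed

lemma hypo_tail_interference_split:
  fixes I N :: "'k set" and P :: "'k \<Rightarrow> real" and x :: "'k \<Rightarrow> real"
  assumes "finite I" "\<And>n. n \<in> N \<union> I \<Longrightarrow> P n > 0" "0 \<le> s2" "0 < gth" "\<And>k. k \<in> I \<Longrightarrow> 0 \<le> x k"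
  shows "hypo_tail N P (gth * ((\<Sum>k\<in>I. P k * x k) + s2))
       = (\<Sum>n\<in>N. hypo_coef N P n * exp (- gth * s2 / P n) * (\<Prod>k\<in>I. exp (- (gth * P k / P n) * max 0 (x k))))"
proof -
  have "0 \<le> gth * ((\<Sum>k\<in>I. P k * x k) + s2)"
    using assms by (intro mult_nonneg_nonneg add_nonneg_nonneg sum_nonneg) (auto simp: less_imp_le)
  moreover have "exp (- (gth * ((\<Sum>k\<in>I. P k * x k) + s2)) / P n)
      = exp (- gth * s2 / P n) * (\<Prod>k\<in>I. exp (- (gth * P k / P n) * max 0 (x k)))" if n: "n \<in> N" for n
  proof -
    have "- (gth * ((\<Sum>k\<in>I. P k * x k) + s2)) / P n
        = - gth * s2 / P n + (\<Sum>k\<in>I. - (gth * P k / P n) * max 0 (x k))"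
      using assms(2)[of n] assms(5) n
      by (simp add: field_simps sum_divide_distrib sum_distrib_left sum_negf[symmetric] max_def)
    then show ?thesis by (simp only: exp_add exp_sum[OF assms(1)])
  qed
  ultimately show ?thesis by (simp add: hypo_tail_def mult.assoc)
qed

lemma expected_hypo_tail_interference:
  fixes I N :: "'k set" and P :: "'k \<Rightarrow> real"
  assumes "finite I" "finite N" "inj_on P N" "\<And>n. n \<in> N \<union> I \<Longrightarrow> P n > 0" "0 \<le> s2" "0 < gth"
  defines "R \<equiv> (\<Sum>n\<in>N. exp (- gth * s2 / P n) * hypo_coef N P n * (\<Prod>k\<in>I. P n / (P k * gth + P n)))"
  shows "(\<integral>\<^sup>+x. ennreal (hypo_tail N P (gth * ((\<Sum>k\<in>I. P k * x k) + s2))) \<partial>PiM I (\<lambda>_. Exp1)) = ennreal R"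
    and "0 \<le> R"
proof -
  interpret product_prob_space "\<lambda>_::'k. Exp1" I by (rule product_prob_space_Exp1)
  define G where "G x = (\<Sum>n\<in>N. hypo_coef N P n * exp (- gth * s2 / P n) *
          (\<Prod>k\<in>I. exp (- (gth * P k / P n) * max 0 (x k))))" for x :: "'k \<Rightarrow> real"
  have P_I: "\<And>k. k \<in> I \<Longrightarrow> 0 < P k" and P_N: "\<And>n. n \<in> N \<Longrightarrow> 0 < P n"
    using assms(4) by auto
  have factor_integrable:
      "integrable (PiM I (\<lambda>_. Exp1)) (\<lambda>x. \<Prod>k\<in>I. exp (- (gth * P k / P n) * max 0 (x k)))"
    and factor_integral: "(\<integral>x. (\<Prod>k\<in>I. exp (- (gth * P k / P n) * max 0 (x k))) \<partial>PiM I (\<lambda>_. Exp1))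
           = (\<Prod>k\<in>I. P n / (P k * gth + P n))" if "n \<in> N" for n
    using interferer_laplace[where P=P and n=n, OF assms(1) P_N[OF that] P_I assms(6)] by simp_all
  have AE_nonneg: "AE x in PiM I (\<lambda>_. Exp1). \<forall>k\<in>I. 0 \<le> x k"
    using assms(1) by (intro eventually_ball_finite ballI) (auto intro: AE_component AE_nonneg_Exp1)
  have AE_G: "AE x in PiM I (\<lambda>_. Exp1). hypo_tail N P (gth * ((\<Sum>k\<in>I. P k * x k) + s2)) = G x"
    using AE_nonneg by eventually_elim (unfold G_def, intro hypo_tail_interference_split, use assms in auto)
  have G_nonneg: "AE x in PiM I (\<lambda>_. Exp1). 0 \<le> G x"
    using AE_G by eventually_elim (metis assms(2,3,4) UnI1 hypo_tail_nonneg)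
  have G_integrable: "integrable (PiM I (\<lambda>_. Exp1)) G"
    unfolding G_def
    by (intro Bochner_Integration.integrable_sum integrable_mult_right factor_integrable)
  have "integral\<^sup>L (PiM I (\<lambda>_. Exp1)) G
      = (\<Sum>n\<in>N. hypo_coef N P n * exp (- gth * s2 / P n) *
           (\<integral>x. (\<Prod>k\<in>I. exp (- (gth * P k / P n) * max 0 (x k))) \<partial>PiM I (\<lambda>_. Exp1)))"
    unfolding G_def
    by (subst Bochner_Integration.integral_sum)
       (use factor_integrable in auto)
  also have "\<dots> = R"
    unfolding R_def
    by (intro sum.cong refl, simp only: factor_integral) (simp add: mult_ac)
  finally have "integral\<^sup>L (PiM I (\<lambda>_. Exp1)) G = R" .
  moreover have "(\<integral>\<^sup>+x. ennreal (hypo_tail N P (gth * ((\<Sum>k\<in>I. P k * x k) + s2))) \<partial>PiM I (\<lambda>_. Exp1))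
      = ennreal (integral\<^sup>L (PiM I (\<lambda>_. Exp1)) G)"
    using AE_G by (subst nn_integral_eq_integral[OF G_integrable G_nonneg, symmetric])
                  (auto intro: nn_integral_cong_AE)
  moreover have "0 \<le> integral\<^sup>L (PiM I (\<lambda>_. Exp1)) G"
    by (rule integral_nonneg_AE[OF G_nonneg])
  ultimately show "(\<integral>\<^sup>+x. ennreal (hypo_tail N P (gth * ((\<Sum>k\<in>I. P k * x k) + s2))) \<partial>PiM I (\<lambda>_. Exp1)) = ennreal R"
    and "0 \<le> R" by simp_all
qed


lemma emeasure_condition_on_interference:
  fixes I N :: "'k set" and P :: "'k \<Rightarrow> real" and c :: "('k \<Rightarrow> real) \<Rightarrow> real"
  assumes fin: "finite I" "finite N" and disj: "I \<inter> N = {}"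
    and inj: "inj_on P N" and pos: "\<And>n. n \<in> N \<Longrightarrow> P n > 0"
    and c_meas [measurable]: "c \<in> borel_measurable (PiM (I \<union> N) (\<lambda>_. Exp1))"
    and c_local: "\<And>x y. (\<And>k. k \<in> I \<Longrightarrow> x k = y k) \<Longrightarrow> c x = c y"
  shows "emeasure (PiM (I \<union> N) (\<lambda>_. Exp1)) {y \<in> space (PiM (I \<union> N) (\<lambda>_. Exp1)). c y < (\<Sum>n\<in>N. P n * y n)}
       = (\<integral>\<^sup>+x. ennreal (hypo_tail N P (c x)) \<partial>PiM I (\<lambda>_. Exp1))"
proof -
  interpret product_prob_space "\<lambda>_::'k. Exp1" by (rule product_prob_space_Exp1)
  define A where "A = {y \<in> space (PiM (I \<union> N) (\<lambda>_. Exp1)). c y < (\<Sum>n\<in>N. P n * y n)}"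
  define B where "B s = {y \<in> space (PiM N (\<lambda>_. Exp1)). s < (\<Sum>n\<in>N. P n * y n)}" for s
  have A_sets [measurable]: "A \<in> sets (PiM (I \<union> N) (\<lambda>_. Exp1))"
    using measurable_weighted_sum[of N "I \<union> N" P] unfolding A_def by measurable
  have B_sets: "B s \<in> sets (PiM N (\<lambda>_. Exp1))" for s
    using measurable_weighted_sum[of N N P] unfolding B_def by measurable
  have "emeasure (PiM (I \<union> N) (\<lambda>_. Exp1)) A = (\<integral>\<^sup>+z. indicator A z \<partial>PiM (I \<union> N) (\<lambda>_. Exp1))"
    using A_sets by simp
  also have "\<dots> = (\<integral>\<^sup>+x. \<integral>\<^sup>+y. indicator A (merge I N (x, y)) \<partial>PiM N (\<lambda>_. Exp1) \<partial>PiM I (\<lambda>_. Exp1))"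
    by (rule product_nn_integral_fold[OF disj fin]) simp
  also have "\<dots> = (\<integral>\<^sup>+x. \<integral>\<^sup>+y. indicator (B (c x)) y \<partial>PiM N (\<lambda>_. Exp1) \<partial>PiM I (\<lambda>_. Exp1))"
  proof (intro nn_integral_cong)
    fix x y assume y: "y \<in> space (PiM N (\<lambda>_. Exp1))"
    have "merge I N (x, y) \<in> space (PiM (I \<union> N) (\<lambda>_. Exp1))"
      by (auto simp: space_PiM merge_def split: if_split_asm)
    moreover have "c (merge I N (x, y)) = c x"
      by (rule c_local) (simp add: merge_def)
    moreover have "(\<Sum>n\<in>N. P n * merge I N (x, y) n) = (\<Sum>n\<in>N. P n * y n)"
      using disj by (intro sum.cong) (auto simp: merge_def)
    ultimately show "indicator A (merge I N (x, y)) = indicator (B (c x)) y"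
      using y by (simp add: A_def B_def split: split_indicator)
  qed
  also have "\<dots> = (\<integral>\<^sup>+x. ennreal (hypo_tail N P (c x)) \<partial>PiM I (\<lambda>_. Exp1))"
    using hypo_tail_emeasure[OF fin(2) inj pos]
    by (intro nn_integral_cong) (simp add: nn_integral_indicator[OF B_sets] B_def)
  finally show ?thesis unfolding A_def .
qed

lemma success_probability_Exp1:
  fixes K N :: "'k set" and P :: "'k \<Rightarrow> real"
  assumes "finite K" "N \<subseteq> K" "inj_on P N" "\<And>n. n \<in> K \<Longrightarrow> P n > 0" "0 \<le> s2" "0 < gth"
  shows "measure (PiM K (\<lambda>_. Exp1))
           {y \<in> space (PiM K (\<lambda>_. Exp1)). gth * ((\<Sum>k\<in>K-N. P k * y k) + s2) < (\<Sum>n\<in>N. P n * y n)}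
       = (\<Sum>n\<in>N. exp (- gth * s2 / P n) * hypo_coef N P n * (\<Prod>k\<in>K-N. P n / (P k * gth + P n)))"
    (is "measure _ ?A = ?R")
proof -
  define I where "I = K - N"
  have K: "K = I \<union> N" and disj: "I \<inter> N = {}" using assms(2) by (auto simp: I_def)
  have fin: "finite I" "finite N" using assms(1,2) by (auto simp: I_def intro: finite_subset)
  have pos: "\<And>n. n \<in> N \<union> I \<Longrightarrow> P n > 0" "\<And>n. n \<in> N \<Longrightarrow> P n > 0"
    using assms(2,4) by (auto simp: I_def)
  have [measurable]: "(\<lambda>y. \<Sum>k\<in>I. P k * y k) \<in> borel_measurable (PiM (I \<union> N) (\<lambda>_. Exp1))"
    by (rule measurable_weighted_sum) simp
  have "emeasure (PiM (I \<union> N) (\<lambda>_. Exp1))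
          {y \<in> space (PiM (I \<union> N) (\<lambda>_. Exp1)). gth * ((\<Sum>k\<in>I. P k * y k) + s2) < (\<Sum>n\<in>N. P n * y n)}
      = (\<integral>\<^sup>+x. ennreal (hypo_tail N P (gth * ((\<Sum>k\<in>I. P k * x k) + s2))) \<partial>PiM I (\<lambda>_. Exp1))"
    by (rule emeasure_condition_on_interference[OF fin disj assms(3) pos(2)]) (auto intro!: sum.cong)
  also have "\<dots> = ennreal (\<Sum>n\<in>N. exp (- gth * s2 / P n) * hypo_coef N P n * (\<Prod>k\<in>I. P n / (P k * gth + P n)))"
    by (rule expected_hypo_tail_interference(1)[OF fin assms(3) pos(1) assms(5,6)])
  finally have "emeasure (PiM K (\<lambda>_. Exp1)) ?A = ennreal ?R"
    unfolding I_def[symmetric] by (simp only: K)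
  moreover have "0 \<le> ?R"
    using expected_hypo_tail_interference(2)[OF fin assms(3) pos(1) assms(5,6)] by (simp add: I_def)
  ultimately show ?thesis by (simp add: measure_def)
qed

section \<open>From the fading coefficients to the product of exponential distributions\<close>

lemma indep_Exp1_joint_distr:
  assumes "prob_space M" "K \<noteq> {}"
    and indep: "prob_space.indep_vars M (\<lambda>_. borel) X K"
    and exp: "\<And>k. k \<in> K \<Longrightarrow> distributed M lborel (X k) (exponential_density 1)"
  shows "distr M (PiM K (\<lambda>_. Exp1)) (\<lambda>x. \<lambda>k\<in>K. X k x) = PiM K (\<lambda>_. Exp1)"
proof -
  interpret prob_space M by fact
  have X_meas: "X k \<in> borel_measurable M" if "k \<in> K" for k
    using distributed_measurable[OF exp[OF that]] by simp
  have X_distr: "distr M borel (X k) = Exp1" if "k \<in> K" for k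
  proof -
    have "distr M borel (X k) = distr M lborel (X k)" by (rule distr_cong) simp_all
    also have "\<dots> = Exp1" unfolding Exp1_def by (rule distributed_distr_eq_density[OF exp[OF that]])
    finally show ?thesis .
  qed
  have "distr M (PiM K (\<lambda>_. Exp1)) (\<lambda>x. \<lambda>k\<in>K. X k x) = distr M (PiM K (\<lambda>_. borel)) (\<lambda>x. \<lambda>k\<in>K. X k x)"
    by (rule distr_cong) (auto intro!: sets_PiM_cong)
  also have "\<dots> = PiM K (\<lambda>k. distr M borel (X k))"
    using indep_vars_iff_distr_eq_PiM'[where I=K and M'="\<lambda>_. borel" and X=X] assms(2) indep X_meas
    by auto
  also have "\<dots> = PiM K (\<lambda>_. Exp1)" by (rule PiM_cong) (auto simp: X_distr)
  finally show ?thesis .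
qed

lemma exponential_AE_pos:
  assumes "prob_space M" "distributed M lborel X (exponential_density 1)"
  shows "AE x in M. 0 < X x"
proof -
  interpret prob_space M by fact
  have [measurable]: "X \<in> borel_measurable M"
    using distributed_measurable[OF assms(2)] by simp
  have "prob {x \<in> space M. X x \<le> 0} = 1 - exp (- 0 * 1)"
    by (rule exponential_distributedD_le[OF assms(2)]) simp_all
  moreover have "{x \<in> space M. X x \<le> 0} \<in> events"
    by measurable
  ultimately have "AE x in M. x \<notin> {x \<in> space M. X x \<le> 0}"
    by (simp add: prob_eq_0)
  then show ?thesis by (rule AE_mp) (auto intro!: AE_I2)
qed

lemma success_probability:
  fixes K N :: "'k set" and P :: "'k \<Rightarrow> real" and X :: "'k \<Rightarrow> 'a \<Rightarrow> real"
  assumes M: "prob_space M" and "finite K" "N \<subseteq> K" "N \<noteq> {}" "inj_on P N" "\<And>n. n \<in> K \<Longrightarrow> P n > 0"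
    and indep: "prob_space.indep_vars M (\<lambda>_. borel) X K"
    and exp: "\<And>k. k \<in> K \<Longrightarrow> distributed M lborel (X k) (exponential_density 1)"
    and "0 \<le> s2" "0 < gth"
  shows "measure M {x \<in> space M. gth * ((\<Sum>k\<in>K-N. X k x * P k) + s2) < (\<Sum>n\<in>N. X n x * P n)}
       = (\<Sum>n\<in>N. exp (- gth * s2 / P n) * hypo_coef N P n * (\<Prod>k\<in>K-N. P n / (P k * gth + P n)))"
proof -
  interpret prob_space M by (fact M)
  let ?Y = "\<lambda>x. \<lambda>k\<in>K. X k x"
  let ?A = "{y \<in> space (PiM K (\<lambda>_. Exp1)). gth * ((\<Sum>k\<in>K-N. P k * y k) + s2) < (\<Sum>n\<in>N. P n * y n)}"
  have "X k \<in> measurable M Exp1" if "k \<in> K" for k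
    using distributed_measurable[OF exp[OF that]] by (simp add: measurable_cong_sets[OF refl sets_Exp1])
  then have Y_meas: "?Y \<in> measurable M (PiM K (\<lambda>_. Exp1))"
    by (rule measurable_restrict)
  have A_sets: "?A \<in> sets (PiM K (\<lambda>_. Exp1))"
    using measurable_weighted_sum[of N K P] measurable_weighted_sum[of "K - N" K P] assms(3)
    by measurable
  have restrict_sum: "(\<Sum>n\<in>B. P n * ?Y x n) = (\<Sum>n\<in>B. X n x * P n)" if "B \<subseteq> K" for B x
    using that by (intro sum.cong) auto
  have "?Y -` ?A \<inter> space M
      = {x \<in> space M. gth * ((\<Sum>k\<in>K-N. X k x * P k) + s2) < (\<Sum>n\<in>N. X n x * P n)}"
    using assms(3) measurable_space[OF Y_meas] restrict_sum by (auto simp: mult.commute)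
  then have "measure M {x \<in> space M. gth * ((\<Sum>k\<in>K-N. X k x * P k) + s2) < (\<Sum>n\<in>N. X n x * P n)}
      = measure (distr M (PiM K (\<lambda>_. Exp1)) ?Y) ?A"
    using Y_meas A_sets by (simp add: measure_distr)
  also have "\<dots> = measure (PiM K (\<lambda>_. Exp1)) ?A"
    using assms(3,4) by (subst indep_Exp1_joint_distr[OF M _ indep exp]) auto
  also have "\<dots> = (\<Sum>n\<in>N. exp (- gth * s2 / P n) * hypo_coef N P n * (\<Prod>k\<in>K-N. P n / (P k * gth + P n)))"
    by (rule success_probability_Exp1[OF assms(2,3,5,6,9,10)])
  finally show ?thesis .
qed

text \<open>The SINR is well defined
  almost surely, and \<open>{SINR \<le> gth}\<close> is then the complement of the success event.\<close>

lemma outage_probability_exponential_powers: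
  fixes K N :: "'k set" and P :: "'k \<Rightarrow> real" and X :: "'k \<Rightarrow> 'a \<Rightarrow> real"
  assumes M: "prob_space M" and "finite K" "N \<subseteq> K" "N \<noteq> {}" "inj_on P N" "\<And>n. n \<in> K \<Longrightarrow> P n > 0"
    and indep: "prob_space.indep_vars M (\<lambda>_. borel) X K"
    and exp: "\<And>k. k \<in> K \<Longrightarrow> distributed M lborel (X k) (exponential_density 1)"
    and "0 \<le> s2" "0 < s2 \<or> K - N \<noteq> {}" "0 < gth"
  shows "measure M {x \<in> space M. (\<Sum>n\<in>N. X n x * P n) / ((\<Sum>k\<in>K-N. X k x * P k) + s2) \<le> gth}
       = 1 - (\<Sum>n\<in>N. exp (- gth * s2 / P n) * hypo_coef N P n * (\<Prod>k\<in>K-N. P n / (P k * gth + P n)))"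
proof -
  interpret prob_space M by (fact M)
  define S where "S x = (\<Sum>n\<in>N. X n x * P n)" for x
  define D where "D x = (\<Sum>k\<in>K-N. X k x * P k) + s2" for x
  have [measurable]: "X k \<in> borel_measurable M" if "k \<in> K" for k
    using distributed_measurable[OF exp[OF that]] by simp
  have [measurable]: "S \<in> borel_measurable M" "D \<in> borel_measurable M"
    unfolding S_def D_def using assms(3) by (measurable; auto)+
  have "AE x in M. \<forall>k\<in>K. 0 < X k x"
    using assms(2) by (intro eventually_ball_finite ballI exponential_AE_pos[OF M exp])
  then have D_pos: "AE x in M. 0 < D x"
  proof eventually_elim
    case (elim x)
    show "0 < D x"
    proof (cases "K - N = {}")
      case True
      then show ?thesis using assms(10) unfolding D_def True by simp
    next
      case False
      then show ?thesis
        using elim assms(2,6,9) unfolding D_def by (intro add_pos_nonneg sum_pos) auto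
    qed
  qed
  have success_event: "{x \<in> space M. gth * D x < S x} \<in> events"
    by measurable
  have "measure M {x \<in> space M. S x / D x \<le> gth} = measure M (space M - {x \<in> space M. gth * D x < S x})"
  proof (rule finite_measure_eq_AE)
    show "AE x in M. (x \<in> {x \<in> space M. S x / D x \<le> gth}) = (x \<in> space M - {x \<in> space M. gth * D x < S x})"
      using D_pos by eventually_elim (auto simp: pos_divide_le_eq not_less mult.commute)
    show "{x \<in> space M. S x / D x \<le> gth} \<in> events"
      by measurable
  qed (use success_event in simp)
  also have "\<dots> = 1 - (\<Sum>n\<in>N. exp (- gth * s2 / P n) * hypo_coef N P n * (\<Prod>k\<in>K-N. P n / (P k * gth + P n)))"
    using prob_compl[OF success_event] success_probability[OF M assms(2-6) indep exp assms(9,11)]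
    by (simp add: S_def D_def)
  finally show ?thesis by (simp only: S_def D_def)
qed

theorem theorem1:
  fixes M :: "'a measure" and K N :: "'k set" and P :: "'k \<Rightarrow> real"
    and h :: "'k \<Rightarrow> 'a \<Rightarrow> complex" and s2 gth :: real
  assumes "prob_space M"
    and "finite K" and "N \<subseteq> K" and "N \<noteq> {}"
    and "\<And>n. n \<in> K \<Longrightarrow> P n > 0"
    and "inj_on P N"
    and "prob_space.indep_vars M (\<lambda>_. borel) h K"
    and "\<And>n. n \<in> K \<Longrightarrow> distributed M lborel (h n) (\<lambda>z. ennreal (cn01_density z))"
    and "s2 \<ge> 0"
    and "s2 > 0 \<or> K - N \<noteq> {}"
    and "gth > 0"
  shows "measure M {x \<in> space M. sinr K N P s2 (\<lambda>n. h n x) \<le> gth} =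
    1 - (\<Sum>n\<in>N. exp (- gth * s2 / P n)
            * (\<Prod>j\<in>N - {n}. P n / (P n - P j))
            * (\<Prod>k\<in>K - N. P n / (P k * gth + P n)))"
proof -
  interpret prob_space M by fact
  have "indep_vars (\<lambda>_. borel) (\<lambda>k x. (cmod (h k x))\<^sup>2) K"
    using indep_vars_compose2[OF assms(7), where Y="\<lambda>_ z. (cmod z)\<^sup>2" and N="\<lambda>_. borel"] by simp
  moreover have "\<And>k. k \<in> K \<Longrightarrow> distributed M lborel (\<lambda>x. (cmod (h k x))\<^sup>2) (exponential_density 1)"
    using cn01_norm_sq_exponential[OF assms(1) assms(8)] by simp
  ultimately show ?thesis
    unfolding sinr_def using outage_probability_exponential_powers[OF assms(1-4,6,5) _ _ assms(9-11)]
    by (simp only: hypo_coef_def)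
qed

end
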